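(* Let $\succeq$ and $\succeq'$ be unbounded moral-hazard preferences on $W$ with parsimonious representations $(c,u)$ and $(c',u')$ respectively. Then $\succeq$ is more optimistic than $\succeq'$ if and only if $u=u'$ and $c$ is up-shifted from $c'$.
   Context: $S=\{s_1<s_2<\dots<s_{|S|}\}$ is a finite totally ordered set of output levels, $\Delta(S)$ its simplex. $\Pi\subseteq\mathbb{R}$ convex; $\Delta(\Pi)$ finite-support distributions on $\Pi$; contracts $w:S\to\Delta(\Pi)$, set $W$; constant contracts identified with elements of $\Delta(\Pi)$; mixtures are probability mixtures ($(\alpha w+(1-\alpha)w')(s)=\alpha w(s)+(1-\alpha)w'(s)$). $u$ extends to $\Delta(\Pi)$ by expectation. Fixed reference prizes $\pi_0<\pi_1$; normalised means $\{u(\pi_0),u(\pi_1)\}=\{0,1\}$; grounded means infimum $0$. For $p,q\in\Delta(S)$, "$p$ FOSD $q$" means $\sum_{s\ge t}p(s)\ge\sum_{s\ge t}q(s)$ for all $t\in S$. A parsimonious representation of $\succeq$ is a pair $(c,u)$ with $c:\Delta(S)\to[0,\infty]$ grounded, convex, lower semi-continuous and $u:\Pi\to\mathbb{R}$ strictly increasing and normalised, such that $w\succeq w'$ iff $\max_{p}[-c(p)+\sum_s u(w(s))p(s)]\ge\max_p[-c(p)+\sum_s u(w'(s))p(s)]$. A moral-hazard preference is one admitting a parsimonious representation. $\succeq$ is unbounded iff there are $x\succ y$ in $\Delta(\Pi)$ such that for every $\alpha\in(0,1)$ there exist $z,z'\in\Delta(\Pi)$ with $y\succ\alpha z+(1-\alpha)x$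 and $\alpha z'+(1-\alpha)y\succ x$. For a relation $\succeq$ and $w,w'\in W$: $w$ is $\succeq$-steeper than $w'$ iff $\tfrac12w(s)+\tfrac12w'(s')\succeq\tfrac12w(s')+\tfrac12w'(s)$ (as constant contracts) for all $s\ge s'$ in $S$. $\succeq$ is more optimistic than $\succeq'$ iff whenever $w,w'\in W$ with $w$ $\succeq$-steeper than $w'$, $w\succeq'w'$ implies $w\succeq w'$ and $w\succ'w'$ implies $w\succ w'$. $c$ is up-shifted from $c'$ iff for any $p,p'\in\Delta(S)$ there exist $q,q'\in\Delta(S)$ such that $p$ FOSD $q'$, $q$ FOSD $p'$, $\tfrac12p+\tfrac12p'=\tfrac12q+\tfrac12q'$, and $c(q)+c'(q')\le c(p)+c'(p')$. *)

theory Defs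
  imports "HOL-Analysis.Analysis"
begin

(* Output levels: a finite linearly ordered type 's.  Delta(S) = probability vectors on 's. *)
definition simplexS :: "(real^'s::{finite,linorder}) set" where
  "simplexS = {p. (\<forall>s. 0 \<le> p $ s) \<and> (\<Sum>s\<in>UNIV. p $ s) = 1}"

(* Delta(Prz): finitely supported probability distributions on Prz, as mass functions *)
definition supp_d :: "(real \<Rightarrow> real) \<Rightarrow> real set" where
  "supp_d d = {x. d x \<noteq> 0}"

definition lotteries :: "real set \<Rightarrow> (real \<Rightarrow> real) set" where
  "lotteries Prz = {d. finite (supp_d d) \<and> supp_d d \<subseteq> Prz \<and> (\<forall>x. 0 \<le> d x)
                       \<and> (\<Sum>x\<in>supp_d d. d x) = 1}"

type_synonym 's contract = "'s \<Rightarrow> (real \<Rightarrow> real)"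

definition contracts :: "real set \<Rightarrow> ('s contract) set" where
  "contracts Prz = {w. \<forall>s. w s \<in> lotteries Prz}"

definition const_contract :: "(real \<Rightarrow> real) \<Rightarrow> 's contract" where
  "const_contract x = (\<lambda>s. x)"

definition mix :: "real \<Rightarrow> (real \<Rightarrow> real) \<Rightarrow> (real \<Rightarrow> real) \<Rightarrow> (real \<Rightarrow> real)" where
  "mix a x y = (\<lambda>t. a * x t + (1 - a) * y t)"

definition expu :: "(real \<Rightarrow> real) \<Rightarrow> (real \<Rightarrow> real) \<Rightarrow> real" where
  "expu u d = (\<Sum>x\<in>supp_d d. u x * d x)"

definition strict :: "('a \<Rightarrow> 'a \<Rightarrow> bool) \<Rightarrow> 'a \<Rightarrow> 'a \<Rightarrow> bool" where
  "strict R a b \<longleftrightarrow> R a b \<and> \<not> R b a"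

definition grounded :: "((real^'s::{finite,linorder}) \<Rightarrow> ereal) \<Rightarrow> bool" where
  "grounded c \<longleftrightarrow> (INF p\<in>simplexS. c p) = 0"

definition convex_cost :: "((real^'s::{finite,linorder}) \<Rightarrow> ereal) \<Rightarrow> bool" where
  "convex_cost c \<longleftrightarrow> (\<forall>p\<in>simplexS. \<forall>q\<in>simplexS. \<forall>t::real. 0 < t \<and> t < 1 \<longrightarrow>
      c (t *\<^sub>R p + (1 - t) *\<^sub>R q) \<le> ereal t * c p + ereal (1 - t) * c q)"

definition lsc_cost :: "((real^'s::{finite,linorder}) \<Rightarrow> ereal) \<Rightarrow> bool" where
  "lsc_cost c \<longleftrightarrow> (\<forall>p\<in>simplexS. \<forall>x::nat \<Rightarrow> real^'s::{finite,linorder}.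
      (\<forall>n. x n \<in> simplexS) \<and> x \<longlonglongrightarrow> p \<longrightarrow> c p \<le> liminf (\<lambda>n. c (x n)))"

definition val :: "((real^'s::{finite,linorder}) \<Rightarrow> ereal) \<Rightarrow> (real \<Rightarrow> real) \<Rightarrow> 's contract \<Rightarrow> ereal" where
  "val c u w = (SUP p\<in>simplexS. - c p + ereal (\<Sum>s\<in>UNIV. expu u (w s) * p $ s))"

definition parsimonious_rep ::
  "real set \<Rightarrow> real \<Rightarrow> real \<Rightarrow> ('s contract \<Rightarrow> 's contract \<Rightarrow> bool)
     \<Rightarrow> ((real^('s::{finite,linorder})) \<Rightarrow> ereal) \<Rightarrow> (real \<Rightarrow> real) \<Rightarrow> bool" where
  "parsimonious_rep Prz pi0 pi1 R c u \<longleftrightarrow>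
     (\<forall>p\<in>simplexS. 0 \<le> c p) \<and> grounded c \<and> convex_cost c \<and> lsc_cost c \<and>
     strict_mono_on Prz u \<and> {u pi0, u pi1} = {0, 1} \<and>
     (\<forall>w\<in>contracts Prz. \<forall>w'\<in>contracts Prz. R w w' \<longleftrightarrow> val c u w \<ge> val c u w')"

definition moral_hazard_pref ::
  "real set \<Rightarrow> real \<Rightarrow> real \<Rightarrow> (('s::{finite,linorder}) contract \<Rightarrow> 's contract \<Rightarrow> bool) \<Rightarrow> bool" where
  "moral_hazard_pref Prz pi0 pi1 R \<longleftrightarrow>
     (\<exists>c u. parsimonious_rep Prz pi0 pi1 R (c :: (real^('s::{finite,linorder})) \<Rightarrow> ereal) u)"

definition unbounded_pref :: "real set \<Rightarrow> ('s contract \<Rightarrow> 's contract \<Rightarrow> bool) \<Rightarrow> bool" where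
  "unbounded_pref Prz R \<longleftrightarrow>
    (\<exists>x\<in>lotteries Prz. \<exists>y\<in>lotteries Prz.
       strict R (const_contract x) (const_contract y) \<and>
       (\<forall>a. 0 < a \<and> a < 1 \<longrightarrow>
          (\<exists>z\<in>lotteries Prz. \<exists>z'\<in>lotteries Prz.
             strict R (const_contract y) (const_contract (mix a z x)) \<and>
             strict R (const_contract (mix a z' y)) (const_contract x))))"

definition steeper ::
  "(('s::{finite,linorder}) contract \<Rightarrow> 's contract \<Rightarrow> bool) \<Rightarrow> 's contract \<Rightarrow> 's contract \<Rightarrow> bool" where
  "steeper R w w' \<longleftrightarrow> (\<forall>s s'. s' \<le> s \<longrightarrow>
      R (const_contract (mix (1/2) (w s) (w' s'))) (const_contract (mix (1/2) (w s') (w' s))))"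

definition more_optimistic ::
  "real set \<Rightarrow> (('s::{finite,linorder}) contract \<Rightarrow> 's contract \<Rightarrow> bool) \<Rightarrow> ('s contract \<Rightarrow> 's contract \<Rightarrow> bool) \<Rightarrow> bool" where
  "more_optimistic Prz R R' \<longleftrightarrow> (\<forall>w\<in>contracts Prz. \<forall>w'\<in>contracts Prz. steeper R w w' \<longrightarrow>
      (R' w w' \<longrightarrow> R w w') \<and> (strict R' w w' \<longrightarrow> strict R w w'))"

definition fosd :: "(real^'s::{finite,linorder}) \<Rightarrow> real^('s::{finite,linorder}) \<Rightarrow> bool" where
  "fosd p q \<longleftrightarrow> (\<forall>t. (\<Sum>s\<in>{s. t \<le> s}. p $ s) \<ge> (\<Sum>s\<in>{s. t \<le> s}. q $ s))"

definition up_shifted :: "((real^'s::{finite,linorder}) \<Rightarrow> ereal) \<Rightarrow> ((real^('s::{finite,linorder})) \<Rightarrow> ereal) \<Rightarrow> bool" where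
  "up_shifted c c' \<longleftrightarrow> (\<forall>p\<in>simplexS. \<forall>p'\<in>simplexS. \<exists>q\<in>simplexS. \<exists>q'\<in>simplexS.
      fosd p q' \<and> fosd q p' \<and>
      (1/2) *\<^sub>R p + (1/2) *\<^sub>R p' = (1/2) *\<^sub>R q + (1/2) *\<^sub>R q' \<and>
      c q + c' q' \<le> c p + c' p')"

end

theory Submission
  imports Defs
begin

text \<open>
  Both preferences rank a contract by the value of its utility profile \<open>A\<close>, the supremum of
  expected utility minus cost over effort choices.  Constant contracts are always mutually steeper,
  so optimism forces the two utilities to induce the same indifferences between lotteries, and
  normalisation then gives \<open>u = u'\<close>.  With a common utility, and since unboundedness makes every
  profile the profile of a contract, \<open>R\<close> is more optimistic than \<open>R'\<close> exactly when \<open>c\<close> gains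
  more than \<open>c'\<close> from passing to a steeper profile: the value difference between \<open>A\<close> and \<open>B\<close>
  is larger under \<open>c\<close> whenever \<open>A - B\<close> is nondecreasing.

  Up-shifting implies this by exchanging near-optimal effort choices, since first-order dominance
  orders the expected payoffs of nondecreasing profiles.  Conversely, if some pair \<open>(p, p')\<close>
  admits no up-shift, the origin is separated from the closure of the convex set of possible
  shifts (lower semicontinuity and compactness of the simplex keep it out of the closure); the
  separating functional yields a profile \<open>a\<close> and a nondecreasing \<open>d\<close> such that the profiles
  \<open>a\<close> and \<open>a - d\<close> violate the inequality.
\<close>

section \<open>Lotteries\<close>

definition point_lottery :: "real \<Rightarrow> real \<Rightarrow> real" where
  "point_lottery x = (\<lambda>t. if t = x then 1 else 0)"

lemma supp_point_lottery: "supp_d (point_lottery x) = {x}"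
  by (auto simp: supp_d_def point_lottery_def)

lemma point_lottery_in_lotteries: "x \<in> Prz \<Longrightarrow> point_lottery x \<in> lotteries Prz"
  by (auto simp: lotteries_def supp_point_lottery) (auto simp: point_lottery_def)

lemma expu_point_lottery: "expu u (point_lottery x) = u x"
  unfolding expu_def supp_point_lottery by (simp add: point_lottery_def)

lemma sum_supp_d_superset:
  assumes "finite T" "supp_d d \<subseteq> T"
  shows "(\<Sum>x\<in>supp_d d. f x * d x) = (\<Sum>x\<in>T. f x * d x)"
  using assms by (intro sum.mono_neutral_left) (auto simp: supp_d_def)

lemma supp_d_mix: "supp_d (mix a x y) \<subseteq> supp_d x \<union> supp_d y"
  by (auto simp: supp_d_def mix_def)

lemma mix_in_lotteries:
  assumes x: "x \<in> lotteries Prz" and y: "y \<in> lotteries Prz" and a: "0 \<le> a" "a \<le> 1"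
  shows "mix a x y \<in> lotteries Prz"
proof -
  define T where "T = supp_d x \<union> supp_d y"
  have T: "finite T" "supp_d x \<subseteq> T" "supp_d y \<subseteq> T" "supp_d (mix a x y) \<subseteq> T"
    using x y supp_d_mix[of a x y] by (auto simp: T_def lotteries_def)
  have "(\<Sum>t\<in>supp_d (mix a x y). mix a x y t) = (\<Sum>t\<in>T. mix a x y t)"
    using sum_supp_d_superset[OF T(1,4), of "\<lambda>_. 1"] by simp
  also have "\<dots> = a * (\<Sum>t\<in>T. x t) + (1 - a) * (\<Sum>t\<in>T. y t)"
    by (simp add: mix_def sum.distrib sum_distrib_left)
  also have "\<dots> = 1"
    using x y sum_supp_d_superset[OF T(1,2), of "\<lambda>_. 1"] sum_supp_d_superset[OF T(1,3), of "\<lambda>_. 1"]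
    by (simp add: lotteries_def)
  moreover have "supp_d (mix a x y) \<subseteq> Prz"
    using x y supp_d_mix[of a x y] by (auto simp: lotteries_def)
  ultimately show ?thesis
    using x y a T by (auto simp: lotteries_def mix_def intro: finite_subset)
qed

lemma expu_mix:
  assumes "x \<in> lotteries Prz" "y \<in> lotteries Prz"
  shows "expu u (mix a x y) = a * expu u x + (1 - a) * expu u y"
proof -
  define T where "T = supp_d x \<union> supp_d y"
  have T: "finite T" "supp_d x \<subseteq> T" "supp_d y \<subseteq> T" "supp_d (mix a x y) \<subseteq> T"
    using assms supp_d_mix[of a x y] by (auto simp: T_def lotteries_def)
  have "expu u (mix a x y) = (\<Sum>t\<in>T. u t * mix a x y t)"
    unfolding expu_def by (rule sum_supp_d_superset[OF T(1,4)])
  also have "\<dots> = a * (\<Sum>t\<in>T. u t * x t) + (1 - a) * (\<Sum>t\<in>T. u t * y t)"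
    unfolding mix_def sum_distrib_left sum.distrib[symmetric]
    by (rule sum.cong) (auto simp: algebra_simps)
  also have "\<dots> = a * expu u x + (1 - a) * expu u y"
    unfolding expu_def using sum_supp_d_superset[OF T(1,2)] sum_supp_d_superset[OF T(1,3)] by simp
  finally show ?thesis .
qed

lemma expu_cong: "x \<in> lotteries Prz \<Longrightarrow> \<forall>t\<in>Prz. u t = u' t \<Longrightarrow> expu u x = expu u' x"
  unfolding expu_def lotteries_def by (intro sum.cong) auto

lemma expu_half_mix_le_iff:
  assumes "x \<in> lotteries Prz" "y \<in> lotteries Prz" "x' \<in> lotteries Prz" "y' \<in> lotteries Prz"
  shows "expu u (mix (1/2) x' y') \<le> expu u (mix (1/2) x y) \<longleftrightarrow>
    expu u x' + expu u y' \<le> expu u x + expu u y"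
  using assms by (simp add: expu_mix) arith

section \<open>The value of a utility profile\<close>

definition payoff :: "('s::{finite,linorder} \<Rightarrow> real) \<Rightarrow> real^'s::{finite,linorder} \<Rightarrow> real" where
  "payoff A p = (\<Sum>s\<in>UNIV. A s * p $ s)"

lemma payoff_add: "payoff A (p + q) = payoff A p + payoff A q"
  by (simp add: payoff_def distrib_left sum.distrib)

lemma payoff_diff: "payoff A (p - q) = payoff A p - payoff A q"
  by (simp add: payoff_def right_diff_distrib sum_subtractf)

lemma payoff_diff_left: "payoff (\<lambda>s. A s - B s) p = payoff A p - payoff B p"
  by (simp add: payoff_def left_diff_distrib sum_subtractf)

lemma simplex_sum_eq_1: "p \<in> simplexS \<Longrightarrow> (\<Sum>s\<in>UNIV. p $ s) = 1"
  by (simp add: simplexS_def)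

lemma simplex_nth_le_1:
  assumes "p \<in> simplexS" shows "p $ s \<le> 1"
proof -
  have "p $ s \<le> (\<Sum>t\<in>UNIV. p $ t)"
    using assms by (intro member_le_sum) (auto simp: simplexS_def)
  thus ?thesis using assms by (simp add: simplexS_def)
qed

lemma payoff_le_sum_abs: "p \<in> simplexS \<Longrightarrow> payoff A p \<le> (\<Sum>s\<in>UNIV. \<bar>A s\<bar>)"
  unfolding payoff_def
proof (intro sum_mono)
  fix s assume p: "p \<in> simplexS"
  have "A s * p $ s \<le> \<bar>A s\<bar> * p $ s" using p by (intro mult_right_mono) (auto simp: simplexS_def)
  also have "\<dots> \<le> \<bar>A s\<bar>" using simplex_nth_le_1[OF p, of s] by (simp add: mult_left_le)
  finally show "A s * p $ s \<le> \<bar>A s\<bar>" .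
qed

lemma payoff_add_const: "p \<in> simplexS \<Longrightarrow> payoff (\<lambda>s. A s + k) p = payoff A p + k"
  by (simp add: payoff_def distrib_right sum.distrib simplex_sum_eq_1 flip: sum_distrib_left)

lemma simplex_convex_comb:
  assumes "p \<in> simplexS" "q \<in> simplexS" "0 \<le> a" "a \<le> 1"
  shows "a *\<^sub>R p + (1 - a) *\<^sub>R q \<in> simplexS"
  using assms by (auto simp: simplexS_def sum.distrib simp flip: sum_distrib_left)

lemma compact_simplexS: "compact (simplexS :: (real^'s::{finite,linorder}) set)"
  unfolding compact_eq_bounded_closed
proof
  have "simplexS = {p::real^'s::{finite,linorder}. \<forall>s. 0 \<le> p $ s} \<inter> {p. (\<Sum>s\<in>UNIV. p $ s) = 1}"
    by (auto simp: simplexS_def)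
  moreover have "closed {p::real^'s::{finite,linorder}. \<forall>s. 0 \<le> p $ s}" "closed {p::real^'s::{finite,linorder}. (\<Sum>s\<in>UNIV. p $ s) = 1}"
    by (intro closed_Collect_all closed_Collect_le closed_Collect_eq continuous_intros)+
  ultimately show "closed (simplexS :: (real^'s::{finite,linorder}) set)" by (metis closed_Int)
  have "norm p \<le> 1" if "p \<in> simplexS" for p :: "real^'s::{finite,linorder}"
    using norm_le_l1_cart[of p] that by (simp add: simplexS_def)
  thus "bounded (simplexS :: (real^'s::{finite,linorder}) set)" unfolding bounded_iff by blast
qed

definition admissible_cost :: "((real^'s::{finite,linorder}) \<Rightarrow> ereal) \<Rightarrow> bool" where
  "admissible_cost c \<longleftrightarrow> (\<forall>p\<in>simplexS. 0 \<le> c p) \<and> grounded c"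

lemma parsimonious_rep_admissible: "parsimonious_rep Prz pi0 pi1 R c u \<Longrightarrow> admissible_cost c"
  by (simp add: parsimonious_rep_def admissible_cost_def)

lemma admissible_cost_nonneg: "admissible_cost c \<Longrightarrow> p \<in> simplexS \<Longrightarrow> 0 \<le> c p"
  by (simp add: admissible_cost_def)

lemma admissible_cost_small:
  assumes "admissible_cost c" "0 < e"
  obtains p r where "p \<in> simplexS" "c p = ereal r" "r < e"
proof -
  have "(INF p\<in>simplexS. c p) < ereal e"
    using assms by (simp add: admissible_cost_def grounded_def)
  then obtain p where p: "p \<in> simplexS" "c p < ereal e" by (auto simp: INF_less_iff)
  moreover have "0 \<le> c p" using p assms(1) by (simp add: admissible_cost_def)
  ultimately show ?thesis using that by (cases "c p") auto
qed

text \<open>For admissible costs the supremum is finite, so nothing is lost by taking its real part.\<close>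
definition profile_value :: "((real^'s::{finite,linorder}) \<Rightarrow> ereal) \<Rightarrow> ('s \<Rightarrow> real) \<Rightarrow> real" where
  "profile_value c A = real_of_ereal (SUP p\<in>simplexS. - c p + ereal (payoff A p))"

lemma SUP_payoff_finite:
  fixes c :: "(real^'s::{finite,linorder}) \<Rightarrow> ereal"
  assumes c: "admissible_cost c"
  shows "(SUP p\<in>simplexS. - c p + ereal (payoff A p)) = ereal (profile_value c A)"
proof -
  let ?S = "SUP p\<in>simplexS. - c p + ereal (payoff A p)"
  obtain p0 r0 where p0: "p0 \<in> simplexS" "c p0 = ereal r0"
    using admissible_cost_small[OF c zero_less_one] by blast
  have "- c p0 + ereal (payoff A p0) \<le> ?S" using p0 by (intro SUP_upper)
  moreover have "- c p0 + ereal (payoff A p0) = ereal (payoff A p0 - r0)" by (simp add: p0(2))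
  ultimately have "?S \<noteq> -\<infinity>" by auto
  moreover have "?S \<le> ereal (\<Sum>s\<in>UNIV. \<bar>A s\<bar>)"
  proof (intro SUP_least)
    fix p :: "real^'s::{finite,linorder}" assume p: "p \<in> simplexS"
    have "- c p \<le> 0" using admissible_cost_nonneg[OF c p] by (simp add: ereal_uminus_le_reorder)
    hence "- c p + ereal (payoff A p) \<le> 0 + ereal (payoff A p)" by (rule add_right_mono)
    also have "\<dots> \<le> ereal (\<Sum>s\<in>UNIV. \<bar>A s\<bar>)" using payoff_le_sum_abs[OF p] by simp
    finally show "- c p + ereal (payoff A p) \<le> ereal (\<Sum>s\<in>UNIV. \<bar>A s\<bar>)" .
  qed
  ultimately show ?thesis unfolding profile_value_def by (cases ?S) auto
qed

lemma val_eq_profile_value: "admissible_cost c \<Longrightarrow> val c u w = ereal (profile_value c (\<lambda>s. expu u (w s)))"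
  by (simp add: val_def SUP_payoff_finite flip: payoff_def)

lemma profile_value_ge:
  assumes c: "admissible_cost c" and p: "p \<in> simplexS" "c p \<noteq> \<infinity>"
  shows "payoff A p - real_of_ereal (c p) \<le> profile_value c A"
proof -
  have "- c p + ereal (payoff A p) \<le> ereal (profile_value c A)"
    unfolding SUP_payoff_finite[OF c, symmetric] using p by (intro SUP_upper)
  thus ?thesis using p admissible_cost_nonneg[OF c p(1)] by (cases "c p") auto
qed

lemma profile_value_le:
  fixes c :: "(real^'s::{finite,linorder}) \<Rightarrow> ereal"
  assumes c: "admissible_cost c"
    and bound: "\<And>p. p \<in> simplexS \<Longrightarrow> c p \<noteq> \<infinity> \<Longrightarrow> payoff A p - real_of_ereal (c p) \<le> z"
  shows "profile_value c A \<le> z"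
proof -
  have "ereal (profile_value c A) \<le> ereal z"
    unfolding SUP_payoff_finite[OF c, symmetric]
  proof (intro SUP_least)
    fix p :: "real^'s::{finite,linorder}" assume p: "p \<in> simplexS"
    show "- c p + ereal (payoff A p) \<le> ereal z"
      using bound[OF p] admissible_cost_nonneg[OF c p] by (cases "c p") auto
  qed
  thus ?thesis by simp
qed

lemma profile_value_approx:
  assumes "admissible_cost c" "0 < e"
  obtains p where "p \<in> simplexS" "c p \<noteq> \<infinity>" "profile_value c A - e < payoff A p - real_of_ereal (c p)"
proof -
  have "\<not> profile_value c A \<le> profile_value c A - e" using assms(2) by simp
  with profile_value_le[OF assms(1), of A "profile_value c A - e"] that show ?thesis by force
qed

lemma profile_value_add_const:
  assumes c: "admissible_cost c"
  shows "profile_value c (\<lambda>s. A s + k) = profile_value c A + k"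
proof (rule antisym)
  show "profile_value c (\<lambda>s. A s + k) \<le> profile_value c A + k"
    by (rule profile_value_le[OF c]) (use profile_value_ge[OF c] payoff_add_const in force)
  have "profile_value c A \<le> profile_value c (\<lambda>s. A s + k) - k"
    by (rule profile_value_le[OF c]) (use profile_value_ge[OF c, of _ "\<lambda>s. A s + k"] payoff_add_const in force)
  thus "profile_value c A + k \<le> profile_value c (\<lambda>s. A s + k)" by simp
qed

lemma profile_value_const:
  fixes c :: "(real^'s::{finite,linorder}) \<Rightarrow> ereal"
  assumes c: "admissible_cost c"
  shows "profile_value c (\<lambda>s. k) = k"
proof (rule antisym)
  show "profile_value c (\<lambda>s. k) \<le> k"
  proof (rule profile_value_le[OF c])
    fix p :: "real^'s::{finite,linorder}" assume p: "p \<in> simplexS" "c p \<noteq> \<infinity>"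
    have "0 \<le> real_of_ereal (c p)" using admissible_cost_nonneg[OF c p(1)] by (simp add: real_of_ereal_pos)
    thus "payoff (\<lambda>s. k) p - real_of_ereal (c p) \<le> k"
      using payoff_add_const[OF p(1), of "\<lambda>_. 0" k] by (simp add: payoff_def)
  qed
  show "k \<le> profile_value c (\<lambda>s. k)"
  proof (rule field_le_epsilon)
    fix e :: real assume "0 < e"
    then obtain p r where p: "p \<in> simplexS" "c p = ereal r" "r < e"
      using admissible_cost_small[OF c] by blast
    have "payoff (\<lambda>s. k) p - r \<le> profile_value c (\<lambda>s. k)"
      using profile_value_ge[OF c p(1)] p(2) by fastforce
    thus "k \<le> profile_value c (\<lambda>s. k) + e"
      using p payoff_add_const[OF p(1), of "\<lambda>_. 0" k] by (simp add: payoff_def)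
  qed
qed

section \<open>First-order dominance and representations\<close>

lemma sum_nonneg_if_upper_tails_nonneg:
  fixes e x :: "'a::linorder \<Rightarrow> real"
  assumes "finite A" "\<forall>s\<in>A. \<forall>s'\<in>A. s' \<le> s \<longrightarrow> e s' \<le> e s" "\<forall>s\<in>A. 0 \<le> e s"
    "\<forall>t\<in>A. 0 \<le> (\<Sum>s\<in>{s\<in>A. t \<le> s}. x s)"
  shows "0 \<le> (\<Sum>s\<in>A. e s * x s)"
  using assms
proof (induction A arbitrary: e rule: finite_linorder_min_induct)
  case empty
  then show ?case by simp
next
  case (insert b A)
  let ?e = "\<lambda>s. e s - e b"
  have "0 \<le> (\<Sum>s\<in>A. ?e s * x s)"
  proof (rule insert.IH)
    show "\<forall>t\<in>A. 0 \<le> (\<Sum>s\<in>{s\<in>A. t \<le> s}. x s)"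
    proof
      fix t assume t: "t \<in> A"
      have "{s\<in>insert b A. t \<le> s} = {s\<in>A. t \<le> s}" using t insert.hyps by auto
      thus "0 \<le> (\<Sum>s\<in>{s\<in>A. t \<le> s}. x s)" using insert.prems(3) t by auto
    qed
  qed (use insert in \<open>auto intro: less_imp_le\<close>)
  moreover have "{s\<in>insert b A. b \<le> s} = insert b A" using insert.hyps by auto
  hence "0 \<le> (\<Sum>s\<in>insert b A. x s)" using insert.prems(3) by (metis insertI1)
  moreover have "b \<notin> A" using insert.hyps by auto
  hence "(\<Sum>s\<in>insert b A. e s * x s) = e b * (\<Sum>s\<in>insert b A. x s) + (\<Sum>s\<in>A. ?e s * x s)"
    using insert.hyps by (simp add: sum_distrib_left algebra_simps sum_subtractf sum.distrib)
  ultimately show ?case using insert.prems(2) by simp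
qed

lemma fosd_payoff_le:
  assumes "p \<in> simplexS" "q \<in> simplexS" "fosd p q" "mono d"
  shows "payoff d q \<le> payoff d p"
proof -
  define m where "m = Min (range d)"
  have m: "m \<le> d s" for s unfolding m_def by (intro Min_le) auto
  have "0 \<le> (\<Sum>s\<in>UNIV. (d s - m) * (p $ s - q $ s))"
  proof (rule sum_nonneg_if_upper_tails_nonneg)
    show "\<forall>t\<in>UNIV. 0 \<le> (\<Sum>s\<in>{s \<in> UNIV. t \<le> s}. p $ s - q $ s)"
      using assms(3) by (simp add: fosd_def sum_subtractf)
  qed (use assms(4) m in \<open>auto simp: mono_def\<close>)
  also have "\<dots> = payoff (\<lambda>s. d s - m) (p - q)" by (simp add: payoff_def)
  also have "\<dots> = payoff d p - payoff d q"
    using payoff_add_const[OF assms(1), of d "- m"] payoff_add_const[OF assms(2), of d "- m"]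
    by (simp add: payoff_diff)
  finally show ?thesis by simp
qed

lemma fosd_complement:
  assumes "q + q' = p + p'" "fosd p q'"
  shows "fosd q p'"
  unfolding fosd_def
proof
  fix t
  have "q $ s = p $ s + p' $ s - q' $ s" for s using assms(1) by (simp add: vec_eq_iff algebra_simps)
  hence "(\<Sum>s\<in>{s. t \<le> s}. q $ s)
      = (\<Sum>s\<in>{s. t \<le> s}. p $ s) + (\<Sum>s\<in>{s. t \<le> s}. p' $ s) - (\<Sum>s\<in>{s. t \<le> s}. q' $ s)"
    by (simp add: sum.distrib sum_subtractf)
  moreover have "(\<Sum>s\<in>{s. t \<le> s}. q' $ s) \<le> (\<Sum>s\<in>{s. t \<le> s}. p $ s)"
    using assms(2) unfolding fosd_def by blast
  ultimately show "(\<Sum>s\<in>{s. t \<le> s}. p' $ s) \<le> (\<Sum>s\<in>{s. t \<le> s}. q $ s)"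
    by linarith
qed

lemma sum_upper_tails_swap:
  fixes \<mu> x :: "'s::{finite,linorder} \<Rightarrow> real"
  shows "(\<Sum>t\<in>UNIV. \<mu> t * (\<Sum>s\<in>{s. t \<le> s}. x s)) = (\<Sum>s\<in>UNIV. (\<Sum>t\<in>{t. t \<le> s}. \<mu> t) * x s)"
proof -
  have "(\<Sum>t\<in>UNIV. \<mu> t * (\<Sum>s\<in>{s. t \<le> s}. x s)) = (\<Sum>t\<in>UNIV. \<Sum>s\<in>UNIV. if t \<le> s then \<mu> t * x s else 0)"
    by (simp add: sum_distrib_left sum.If_cases Int_def)
  also have "\<dots> = (\<Sum>s\<in>UNIV. \<Sum>t\<in>UNIV. if t \<le> s then \<mu> t * x s else 0)" by (rule sum.swap)
  also have "\<dots> = (\<Sum>s\<in>UNIV. (\<Sum>t\<in>{t. t \<le> s}. \<mu> t) * x s)"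
    by (simp add: sum_distrib_right sum.If_cases Int_def)
  finally show ?thesis .
qed

lemma const_contract_in_contracts: "x \<in> lotteries Prz \<Longrightarrow> const_contract x \<in> contracts Prz"
  by (simp add: contracts_def const_contract_def)

lemma contracts_lottery: "w \<in> contracts Prz \<Longrightarrow> w s \<in> lotteries Prz"
  by (simp add: contracts_def)

lemma rep_le_iff:
  assumes "parsimonious_rep Prz pi0 pi1 R c u" "w \<in> contracts Prz" "w' \<in> contracts Prz"
  shows "R w w' \<longleftrightarrow> profile_value c (\<lambda>s. expu u (w' s)) \<le> profile_value c (\<lambda>s. expu u (w s))"
  using assms val_eq_profile_value[OF parsimonious_rep_admissible[OF assms(1)]]
  unfolding parsimonious_rep_def by auto

lemma rep_strict_iff:
  assumes "parsimonious_rep Prz pi0 pi1 R c u" "w \<in> contracts Prz" "w' \<in> contracts Prz"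
  shows "strict R w w' \<longleftrightarrow> profile_value c (\<lambda>s. expu u (w' s)) < profile_value c (\<lambda>s. expu u (w s))"
  using rep_le_iff[OF assms] rep_le_iff[OF assms(1,3,2)] unfolding strict_def by auto

lemma rep_const_le_iff:
  assumes "parsimonious_rep Prz pi0 pi1 R c u" "x \<in> lotteries Prz" "y \<in> lotteries Prz"
  shows "R (const_contract x) (const_contract y) \<longleftrightarrow> expu u y \<le> expu u x"
  using rep_le_iff[OF assms(1) const_contract_in_contracts[OF assms(2)] const_contract_in_contracts[OF assms(3)]]
    profile_value_const[OF parsimonious_rep_admissible[OF assms(1)]] by (simp add: const_contract_def)

lemma rep_const_strict_iff:
  assumes "parsimonious_rep Prz pi0 pi1 R c u" "x \<in> lotteries Prz" "y \<in> lotteries Prz"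
  shows "strict R (const_contract x) (const_contract y) \<longleftrightarrow> expu u y < expu u x"
  using rep_const_le_iff[OF assms] rep_const_le_iff[OF assms(1,3,2)] unfolding strict_def by auto

lemma rep_steeper_iff:
  assumes rep: "parsimonious_rep Prz pi0 pi1 R c u" and w: "w \<in> contracts Prz" "w' \<in> contracts Prz"
  shows "steeper R w w' \<longleftrightarrow> mono (\<lambda>s. expu u (w s) - expu u (w' s))"
proof -
  have "R (const_contract (mix (1/2) (w s) (w' s'))) (const_contract (mix (1/2) (w s') (w' s)))
      \<longleftrightarrow> expu u (w s') - expu u (w' s') \<le> expu u (w s) - expu u (w' s)" for s s'
  proof -
    have l: "w s \<in> lotteries Prz" "w' s' \<in> lotteries Prz" "w s' \<in> lotteries Prz" "w' s \<in> lotteries Prz"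
      using w by (simp_all add: contracts_lottery)
    have "R (const_contract (mix (1/2) (w s) (w' s'))) (const_contract (mix (1/2) (w s') (w' s)))
        \<longleftrightarrow> expu u (mix (1/2) (w s') (w' s)) \<le> expu u (mix (1/2) (w s) (w' s'))"
      using l by (intro rep_const_le_iff[OF rep] mix_in_lotteries) auto
    also have "\<dots> \<longleftrightarrow> expu u (w s') + expu u (w' s) \<le> expu u (w s) + expu u (w' s')"
      by (rule expu_half_mix_le_iff[OF l])
    finally show ?thesis by linarith
  qed
  thus ?thesis unfolding steeper_def mono_def by blast
qed

lemma mixtures_escape_below:
  fixes g :: "'a \<Rightarrow> real"
  assumes "y < x" and escape: "\<And>a. 0 < a \<Longrightarrow> a < 1 \<Longrightarrow> \<exists>z\<in>Z. a * g z + (1 - a) * x < y"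
  shows "\<exists>z\<in>Z. g z \<le> t"
proof -
  define a where "a = (x - y) / (x - y + \<bar>x - t\<bar> + 1)"
  have a: "0 < a" "a < 1" using assms(1) by (auto simp: a_def field_simps)
  then obtain z where z: "z \<in> Z" "a * g z + (1 - a) * x < y" using escape by blast
  have "a * (x - y + \<bar>x - t\<bar> + 1) = x - y" using assms(1) by (simp add: a_def)
  hence "a * g z < a * (x - (x - y + \<bar>x - t\<bar> + 1))" using z(2) by (simp add: algebra_simps)
  hence "g z < x - (x - y + \<bar>x - t\<bar> + 1)" using a by simp
  hence "g z \<le> t" using abs_ge_self[of "x - t"] assms(1) by linarith
  thus ?thesis using z(1) by blast
qed

lemma unbounded_expu_surj:
  assumes rep: "parsimonious_rep Prz pi0 pi1 R c u" and unb: "unbounded_pref Prz R"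
  shows "\<exists>d\<in>lotteries Prz. expu u d = t"
proof -
  obtain x y where xy: "x \<in> lotteries Prz" "y \<in> lotteries Prz"
    "strict R (const_contract x) (const_contract y)"
    and mixes: "\<And>a. 0 < a \<Longrightarrow> a < 1 \<Longrightarrow> \<exists>z\<in>lotteries Prz. \<exists>z'\<in>lotteries Prz.
             strict R (const_contract y) (const_contract (mix a z x)) \<and>
             strict R (const_contract (mix a z' y)) (const_contract x)"
    using unb unfolding unbounded_pref_def by blast
  have less: "expu u y < expu u x" using rep_const_strict_iff[OF rep xy(1,2)] xy(3) by simp
  have "\<exists>z\<in>lotteries Prz. a * expu u z + (1 - a) * expu u x < expu u y" if "0 < a" "a < 1" for a
    using mixes[OF that] rep_const_strict_iff[OF rep xy(2) mix_in_lotteries[OF _ xy(1)]]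
      expu_mix[OF _ xy(1)] that by force
  then obtain z where z: "z \<in> lotteries Prz" "expu u z \<le> t"
    using mixtures_escape_below[OF less] by blast
  \<comment> \<open>the same escape argument for \<open>- expu u\<close> bounds expected utility from above\<close>
  have "\<exists>z\<in>lotteries Prz. a * - expu u z + (1 - a) * - expu u y < - expu u x" if "0 < a" "a < 1" for a
    using mixes[OF that] rep_const_strict_iff[OF rep mix_in_lotteries[OF _ xy(2)] xy(1)]
      expu_mix[OF _ xy(2)] that by force
  then obtain z' where z': "z' \<in> lotteries Prz" "- expu u z' \<le> - t"
    using mixtures_escape_below[where x="- expu u y" and y="- expu u x" and g="\<lambda>z. - expu u z"
        and Z="lotteries Prz" and t="- t"] less by auto
  show ?thesis
  proof (cases "expu u z = expu u z'")
    case True thus ?thesis using z z' by (intro bexI[of _ z]) auto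
  next
    case False
    hence lt: "expu u z < expu u z'" using z z' by simp
    define l where "l = (expu u z' - t) / (expu u z' - expu u z)"
    have l: "0 \<le> l" "l \<le> 1" using lt z z' by (auto simp: l_def field_simps)
    have "expu u (mix l z z') = expu u z' - l * (expu u z' - expu u z)"
      by (simp add: expu_mix[OF z(1) z'(1)] algebra_simps)
    also have "\<dots> = t" using lt by (simp add: l_def)
    finally show ?thesis using mix_in_lotteries[OF z(1) z'(1) l] by blast
  qed
qed

lemma unbounded_profile_realizable:
  assumes "parsimonious_rep Prz pi0 pi1 R c u" "unbounded_pref Prz R"
  obtains w where "w \<in> contracts Prz" "\<And>s. expu u (w s) = A s"
proof -
  have "\<forall>s. \<exists>d. d \<in> lotteries Prz \<and> expu u d = A s"
    using unbounded_expu_surj[OF assms] by blast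
  then obtain w where "\<forall>s. w s \<in> lotteries Prz \<and> expu u (w s) = A s" by metis
  thus ?thesis using that by (auto simp: contracts_def)
qed

lemma parsimonious_rep_normalised:
  assumes "parsimonious_rep Prz pi0 pi1 R c u" "pi0 \<in> Prz" "pi1 \<in> Prz" "pi0 < pi1"
  shows "u pi0 = 0" "u pi1 = 1"
proof -
  have "u pi0 < u pi1" "{u pi0, u pi1} = {0, 1}"
    using assms by (auto simp: parsimonious_rep_def strict_mono_on_def)
  thus "u pi0 = 0" "u pi1 = 1" by (auto simp: doubleton_eq_iff)
qed

lemma expu_mix_points:
  "x \<in> Prz \<Longrightarrow> y \<in> Prz \<Longrightarrow> expu u (mix a (point_lottery x) (point_lottery y)) = a * u x + (1 - a) * u y"
  by (simp add: expu_mix[OF point_lottery_in_lotteries point_lottery_in_lotteries] expu_point_lottery)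

text \<open>Each prize is indifferent to a mixture of the other two among \<open>x, pi0, pi1\<close>.\<close>
lemma same_indifference_imp_same_utility:
  fixes u u' :: "real \<Rightarrow> real"
  assumes sm: "strict_mono_on Prz u" and n: "u pi0 = 0" "u pi1 = 1" "u' pi0 = 0" "u' pi1 = 1"
    and pi: "pi0 \<in> Prz" "pi1 \<in> Prz" "pi0 < pi1"
    and indiff: "\<And>x y. x \<in> lotteries Prz \<Longrightarrow> y \<in> lotteries Prz \<Longrightarrow> expu u x = expu u y \<Longrightarrow> expu u' x = expu u' y"
    and x: "x \<in> Prz"
  shows "u x = u' x"
proof -
  have transfer: "a * u' z1 + (1 - a) * u' z2 = u' z3"
    if "a * u z1 + (1 - a) * u z2 = u z3" "0 \<le> a" "a \<le> 1" "z1 \<in> Prz" "z2 \<in> Prz" "z3 \<in> Prz" for a z1 z2 z3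
    using indiff[OF mix_in_lotteries[OF point_lottery_in_lotteries point_lottery_in_lotteries]
        point_lottery_in_lotteries, of z1 z2 a z3] that
    by (simp add: expu_mix_points expu_point_lottery)
  consider "x < pi0" | "pi0 \<le> x" "x \<le> pi1" | "pi1 < x" by linarith
  then show ?thesis
  proof cases
    case 1
    hence "u x < 0" using sm x pi n unfolding strict_mono_on_def by metis
    define a where "a = 1 / (1 - u x)"
    have "a * u x + (1 - a) * u pi1 = u pi0" using \<open>u x < 0\<close> n by (simp add: a_def field_simps)
    hence "a * u' x + (1 - a) = 0" using transfer[of a x pi1 pi0] x pi n \<open>u x < 0\<close>
      by (simp add: a_def field_simps)
    moreover have "0 < a" using \<open>u x < 0\<close> by (simp add: a_def)
    ultimately have "u' x = 1 - 1 / a" by (simp add: field_simps)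
    thus ?thesis by (simp add: a_def)
  next
    case 2
    have "u pi0 \<le> u x" "u x \<le> u pi1"
      using sm x pi 2 unfolding strict_mono_on_def by (metis order.order_iff_strict)+
    thus ?thesis using transfer[of "u x" pi1 pi0 x] x pi n by simp
  next
    case 3
    hence "1 < u x" using sm x pi n unfolding strict_mono_on_def by metis
    define a where "a = 1 / u x"
    have "a * u x + (1 - a) * u pi0 = u pi1" using \<open>1 < u x\<close> n by (simp add: a_def)
    hence "a * u' x = 1" using transfer[of a x pi0 pi1] x pi n \<open>1 < u x\<close> by (simp add: a_def)
    thus ?thesis using \<open>1 < u x\<close> by (simp add: a_def field_simps)
  qed
qed

section \<open>Separating a non-improvable pair\<close>

definition tail_gap :: "real^'s::{finite,linorder} \<Rightarrow> real^'s::{finite,linorder} \<Rightarrow> real^'s::{finite,linorder}" where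
  "tail_gap p q = (\<chi> t. \<Sum>s\<in>{s. t \<le> s}. p $ s - q $ s)"

lemma fosd_iff_tail_gap_nonneg: "fosd p q \<longleftrightarrow> (\<forall>t. 0 \<le> tail_gap p q $ t)"
  by (simp add: fosd_def tail_gap_def sum_subtractf)

lemma tail_gap_convex_comb:
  "tail_gap p (a *\<^sub>R q1 + (1 - a) *\<^sub>R q2) = a *\<^sub>R tail_gap p q1 + (1 - a) *\<^sub>R tail_gap p q2"
  by (simp add: tail_gap_def vec_eq_iff sum_distrib_left sum.distrib[symmetric] algebra_simps)

lemma tail_gap_weighted_sum:
  "(\<Sum>t\<in>UNIV. \<mu> t * tail_gap p q $ t) = payoff (\<lambda>s. \<Sum>t\<in>{t. t \<le> s}. \<mu> t) (p - q)"
  by (simp add: tail_gap_def payoff_def sum_upper_tails_swap)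

lemma cost_convex_comb:
  fixes c :: "(real^'s::{finite,linorder}) \<Rightarrow> ereal"
  assumes cv: "convex_cost c" and nn: "\<forall>q\<in>simplexS. 0 \<le> c q"
    and q: "q1 \<in> simplexS" "q2 \<in> simplexS" "c q1 \<noteq> \<infinity>" "c q2 \<noteq> \<infinity>" and a: "0 \<le> a" "a \<le> 1"
  shows "c (a *\<^sub>R q1 + (1 - a) *\<^sub>R q2) \<noteq> \<infinity>"
    "real_of_ereal (c (a *\<^sub>R q1 + (1 - a) *\<^sub>R q2)) \<le> a * real_of_ereal (c q1) + (1 - a) * real_of_ereal (c q2)"
proof -
  have "c (a *\<^sub>R q1 + (1 - a) *\<^sub>R q2) \<noteq> \<infinity> \<and>
    real_of_ereal (c (a *\<^sub>R q1 + (1 - a) *\<^sub>R q2)) \<le> a * real_of_ereal (c q1) + (1 - a) * real_of_ereal (c q2)"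
  proof (cases "a = 0 \<or> a = 1")
    case True thus ?thesis using q by auto
  next
    case False
    hence a': "0 < a" "a < 1" using a by auto
    have "0 \<le> c (a *\<^sub>R q1 + (1 - a) *\<^sub>R q2)" using nn simplex_convex_comb[OF q(1,2) a] by auto
    moreover obtain r1 r2 where r: "c q1 = ereal r1" "c q2 = ereal r2"
      using q nn by (cases "c q1"; cases "c q2") auto
    moreover have "c (a *\<^sub>R q1 + (1 - a) *\<^sub>R q2) \<le> ereal (a * r1 + (1 - a) * r2)"
      using cv q a' r unfolding convex_cost_def by force
    ultimately show ?thesis by (cases "c (a *\<^sub>R q1 + (1 - a) *\<^sub>R q2)") auto
  qed
  thus "c (a *\<^sub>R q1 + (1 - a) *\<^sub>R q2) \<noteq> \<infinity>"
    "real_of_ereal (c (a *\<^sub>R q1 + (1 - a) *\<^sub>R q2)) \<le> a * real_of_ereal (c q1) + (1 - a) * real_of_ereal (c q2)"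
    by auto
qed

text \<open>Moves \<open>(p, p') \<mapsto> (q, q')\<close> of finite cost, recorded by the change of the total, the excess
  of \<open>p\<close> over \<open>q'\<close> in first-order dominance (decreased by any slack \<open>y \<ge> 0\<close>) and the cost change
  relative to \<open>K\<close> (increased by any slack).\<close>
definition improvement_set ::
  "((real^'s::{finite,linorder}) \<Rightarrow> ereal) \<Rightarrow> ((real^'s::{finite,linorder}) \<Rightarrow> ereal) \<Rightarrow> real^'s::{finite,linorder} \<Rightarrow> real^'s::{finite,linorder}
     \<Rightarrow> real \<Rightarrow> (((real^'s::{finite,linorder}) \<times> (real^'s::{finite,linorder})) \<times> real) set" where
  "improvement_set c c' p p' K = {((q + q' - p - p', tail_gap p q' - y), r) | q q' y r.
      q \<in> simplexS \<and> q' \<in> simplexS \<and> (\<forall>t. 0 \<le> y $ t) \<and> c q \<noteq> \<infinity> \<and> c' q' \<noteq> \<infinity> \<and>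
      real_of_ereal (c q) + real_of_ereal (c' q') - K \<le> r}"

lemma improvement_setI:
  "q \<in> simplexS \<Longrightarrow> q' \<in> simplexS \<Longrightarrow> \<forall>t. 0 \<le> y $ t \<Longrightarrow> c q \<noteq> \<infinity> \<Longrightarrow> c' q' \<noteq> \<infinity> \<Longrightarrow>
    real_of_ereal (c q) + real_of_ereal (c' q') - K \<le> r \<Longrightarrow>
    ((q + q' - p - p', tail_gap p q' - y), r) \<in> improvement_set c c' p p' K"
  unfolding improvement_set_def by blast

lemma improvement_set_ereal_bound:
  fixes c c' :: "(real^'s::{finite,linorder}) \<Rightarrow> ereal"
  assumes nn: "\<forall>q\<in>simplexS. 0 \<le> c q" "\<forall>q\<in>simplexS. 0 \<le> c' q"
    and x: "x \<in> improvement_set c c' p p' K"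
  shows "\<exists>q q' y r. x = ((q + q' - p - p', tail_gap p q' - y), r) \<and> q \<in> simplexS \<and> q' \<in> simplexS \<and>
    (\<forall>t. 0 \<le> y $ t) \<and> c q + c' q' \<le> ereal (K + r)"
proof -
  obtain q q' y r where "x = ((q + q' - p - p', tail_gap p q' - y), r)" "q \<in> simplexS" "q' \<in> simplexS"
    "\<forall>t. 0 \<le> y $ t" "c q \<noteq> \<infinity>" "c' q' \<noteq> \<infinity>" "real_of_ereal (c q) + real_of_ereal (c' q') - K \<le> r"
    using x unfolding improvement_set_def by blast
  moreover from this have "c q + c' q' \<le> ereal (K + r)"
    using nn by (cases "c q"; cases "c' q'") auto
  ultimately show ?thesis by blast
qed

lemma convex_improvement_set:
  fixes c c' :: "(real^'s::{finite,linorder}) \<Rightarrow> ereal"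
  assumes cv: "convex_cost c" "convex_cost c'" and nn: "\<forall>q\<in>simplexS. 0 \<le> c q" "\<forall>q\<in>simplexS. 0 \<le> c' q"
  shows "convex (improvement_set c c' p p' K)"
  unfolding convex_alt
proof (intro ballI allI impI)
  fix z x and a :: real
  assume z: "z \<in> improvement_set c c' p p' K" and x: "x \<in> improvement_set c c' p p' K"
    and a: "0 \<le> a \<and> a \<le> 1"
  obtain q1 q1' y1 r1 where 1: "x = ((q1 + q1' - p - p', tail_gap p q1' - y1), r1)"
    "q1 \<in> simplexS" "q1' \<in> simplexS" "\<forall>t. 0 \<le> y1 $ t" "c q1 \<noteq> \<infinity>" "c' q1' \<noteq> \<infinity>"
    "real_of_ereal (c q1) + real_of_ereal (c' q1') - K \<le> r1"
    using x unfolding improvement_set_def by blast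
  obtain q2 q2' y2 r2 where 2: "z = ((q2 + q2' - p - p', tail_gap p q2' - y2), r2)"
    "q2 \<in> simplexS" "q2' \<in> simplexS" "\<forall>t. 0 \<le> y2 $ t" "c q2 \<noteq> \<infinity>" "c' q2' \<noteq> \<infinity>"
    "real_of_ereal (c q2) + real_of_ereal (c' q2') - K \<le> r2"
    using z unfolding improvement_set_def by blast
  define q q' where "q = a *\<^sub>R q1 + (1 - a) *\<^sub>R q2" and "q' = a *\<^sub>R q1' + (1 - a) *\<^sub>R q2'"
  have cq: "c q \<noteq> \<infinity>" "real_of_ereal (c q) \<le> a * real_of_ereal (c q1) + (1 - a) * real_of_ereal (c q2)"
    unfolding q_def using cost_convex_comb[OF cv(1) nn(1) 1(2) 2(2) 1(5) 2(5)] a by auto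
  have cq': "c' q' \<noteq> \<infinity>" "real_of_ereal (c' q') \<le> a * real_of_ereal (c' q1') + (1 - a) * real_of_ereal (c' q2')"
    unfolding q'_def using cost_convex_comb[OF cv(2) nn(2) 1(3) 2(3) 1(6) 2(6)] a by auto
  have "a * (real_of_ereal (c q1) + real_of_ereal (c' q1') - K) \<le> a * r1"
    "(1 - a) * (real_of_ereal (c q2) + real_of_ereal (c' q2') - K) \<le> (1 - a) * r2"
    using 1(7) 2(7) a by (intro mult_left_mono; simp)+
  hence "real_of_ereal (c q) + real_of_ereal (c' q') - K \<le> a * r1 + (1 - a) * r2"
    using cq(2) cq'(2) by (simp add: algebra_simps)
  moreover have "(1 - a) *\<^sub>R z + a *\<^sub>R x
      = ((q + q' - p - p', tail_gap p q' - (a *\<^sub>R y1 + (1 - a) *\<^sub>R y2)), a * r1 + (1 - a) * r2)"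
    unfolding 1(1) 2(1) q_def q'_def tail_gap_convex_comb by (simp add: algebra_simps)
  moreover have "q \<in> simplexS" "q' \<in> simplexS"
    unfolding q_def q'_def using simplex_convex_comb 1(2,3) 2(2,3) a by auto
  moreover have "\<forall>t. 0 \<le> (a *\<^sub>R y1 + (1 - a) *\<^sub>R y2) $ t" using 1(4) 2(4) a by simp
  ultimately show "(1 - a) *\<^sub>R z + a *\<^sub>R x \<in> improvement_set c c' p p' K"
    using cq(1) cq'(1) by (simp add: improvement_setI)
qed

lemma fosd_limit:
  assumes "q \<longlonglongrightarrow> Q" "(\<lambda>n. tail_gap p (q n) - y n) \<longlonglongrightarrow> 0" "\<And>n t. 0 \<le> y n $ t"
  shows "fosd p Q"
  unfolding fosd_iff_tail_gap_nonneg
proof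
  fix t
  have gap: "(\<lambda>n. tail_gap p (q n)) \<longlonglongrightarrow> tail_gap p Q"
  proof (rule vec_tendstoI)
    fix i
    show "(\<lambda>n. tail_gap p (q n) $ i) \<longlonglongrightarrow> tail_gap p Q $ i"
      unfolding tail_gap_def vec_lambda_beta
      by (intro tendsto_sum tendsto_diff tendsto_const tendsto_vec_nth[OF assms(1)])
  qed
  have "(\<lambda>n. y n) \<longlonglongrightarrow> tail_gap p Q - 0"
    using tendsto_diff[OF gap assms(2)] by simp
  thus "0 \<le> tail_gap p Q $ t"
    using assms(3) by (intro LIMSEQ_le_const[OF tendsto_vec_nth]) auto
qed

lemma lsc_cost_sum_limit:
  fixes c c' :: "(real^'s::{finite,linorder}) \<Rightarrow> ereal"
  assumes lsc: "lsc_cost c" "lsc_cost c'" and nn: "\<forall>q\<in>simplexS. 0 \<le> c q" "\<forall>q\<in>simplexS. 0 \<le> c' q"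
    and q: "\<And>n. q n \<in> simplexS" "\<And>n. q' n \<in> simplexS" "q \<longlonglongrightarrow> Q" "q' \<longlonglongrightarrow> Q'" "Q \<in> simplexS" "Q' \<in> simplexS"
    and bound: "\<And>n. c (q n) + c' (q' n) \<le> ereal (K + r n)" and r: "r \<longlonglongrightarrow> 0"
  shows "c Q + c' Q' \<le> ereal K"
proof -
  have "c Q + c' Q' \<le> liminf (\<lambda>n. c (q n)) + liminf (\<lambda>n. c' (q' n))"
    using lsc q unfolding lsc_cost_def by (intro add_mono) auto
  also have "\<dots> \<le> liminf (\<lambda>n. c (q n) + c' (q' n))"
    by (rule Liminf_add_le) (use nn q in auto)
  also have "\<dots> \<le> liminf (\<lambda>n. ereal (K + r n))"
    by (intro Liminf_mono always_eventually allI bound)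
  also have "\<dots> = ereal K"
  proof (rule lim_imp_Liminf)
    have "(\<lambda>n. K + r n) \<longlonglongrightarrow> K" using tendsto_add[OF tendsto_const r, of K] by simp
    thus "(\<lambda>n. ereal (K + r n)) \<longlonglongrightarrow> ereal K" by (rule tendsto_ereal)
  qed simp
  finally show ?thesis .
qed

lemma zero_notin_closure_improvement_set:
  fixes c c' :: "(real^'s::{finite,linorder}) \<Rightarrow> ereal"
  assumes nn: "\<forall>q\<in>simplexS. 0 \<le> c q" "\<forall>q\<in>simplexS. 0 \<le> c' q"
    and lsc: "lsc_cost c" "lsc_cost c'"
    and p: "p \<in> simplexS" "p' \<in> simplexS" "c p + c' p' = ereal K"
    and no_improvement: "\<forall>q\<in>simplexS. \<forall>q'\<in>simplexS. fosd p q' \<longrightarrow> q + q' = p + p' \<longrightarrow> c p + c' p' < c q + c' q'"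
  shows "0 \<notin> closure (improvement_set c c' p p' K)"
proof
  assume "0 \<in> closure (improvement_set c c' p p' K)"
  then obtain X where X: "\<And>n. X n \<in> improvement_set c c' p p' K" "X \<longlonglongrightarrow> 0"
    unfolding closure_sequential by blast
  have "\<forall>n. \<exists>q q' y r. X n = ((q + q' - p - p', tail_gap p q' - y), r) \<and> q \<in> simplexS \<and> q' \<in> simplexS \<and>
      (\<forall>t. 0 \<le> y $ t) \<and> c q + c' q' \<le> ereal (K + r)"
    by (intro allI improvement_set_ereal_bound[OF nn X(1)])
  then have "\<exists>q q' y r. \<forall>n. X n = ((q n + q' n - p - p', tail_gap p (q' n) - y n), r n) \<and>
      q n \<in> simplexS \<and> q' n \<in> simplexS \<and> (\<forall>t. 0 \<le> y n $ t) \<and> c (q n) + c' (q' n) \<le> ereal (K + r n)"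
    by (simp only: choice_iff)
  then obtain q q' y r where qq_all: "\<forall>n. X n = ((q n + q' n - p - p', tail_gap p (q' n) - y n), r n) \<and>
      q n \<in> simplexS \<and> q' n \<in> simplexS \<and> (\<forall>t. 0 \<le> y n $ t) \<and> c (q n) + c' (q' n) \<le> ereal (K + r n)"
    by blast
  hence qq: "\<And>n. X n = ((q n + q' n - p - p', tail_gap p (q' n) - y n), r n)"
    "\<And>n. q n \<in> simplexS" "\<And>n. q' n \<in> simplexS" "\<And>n t. 0 \<le> y n $ t"
    "\<And>n. c (q n) + c' (q' n) \<le> ereal (K + r n)"
    by simp_all
  have "(q n, q' n) \<in> simplexS \<times> simplexS" for n using qq(2,3) by simp
  from compact_Times[OF compact_simplexS compact_simplexS, unfolded compact_def, rule_format, of "\<lambda>n. (q n, q' n)", OF this]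
  obtain Q Q' \<sigma> where QQ: "Q \<in> simplexS" "Q' \<in> simplexS" "strict_mono \<sigma>"
    "((\<lambda>n. (q n, q' n)) \<circ> \<sigma>) \<longlonglongrightarrow> (Q, Q')" by auto
  have lim: "(\<lambda>n. q (\<sigma> n)) \<longlonglongrightarrow> Q" "(\<lambda>n. q' (\<sigma> n)) \<longlonglongrightarrow> Q'"
    using tendsto_fst[OF QQ(4)] tendsto_snd[OF QQ(4)] by (simp_all add: o_def)
  have X\<sigma>: "(\<lambda>n. X (\<sigma> n)) \<longlonglongrightarrow> 0" using LIMSEQ_subseq_LIMSEQ[OF X(2) QQ(3)] by (simp add: o_def)
  have "(\<lambda>n. q (\<sigma> n) + q' (\<sigma> n) - p - p') \<longlonglongrightarrow> 0"
    using tendsto_fst[OF tendsto_fst[OF X\<sigma>]] by (simp add: qq(1))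
  moreover have "(\<lambda>n. q (\<sigma> n) + q' (\<sigma> n) - p - p') \<longlonglongrightarrow> Q + Q' - p - p'"
    by (intro tendsto_intros lim)
  ultimately have "Q + Q' - p - p' = 0" by (rule LIMSEQ_unique[rotated])
  hence sum: "Q + Q' = p + p'" by (simp add: algebra_simps)
  have fosd: "fosd p Q'"
  proof (rule fosd_limit[OF lim(2)])
    show "(\<lambda>n. tail_gap p (q' (\<sigma> n)) - y (\<sigma> n)) \<longlonglongrightarrow> 0"
      using tendsto_snd[OF tendsto_fst[OF X\<sigma>]] by (simp add: qq(1))
  qed (rule qq(4))
  have "c p + c' p' < c Q + c' Q'" by (rule no_improvement[rule_format, OF QQ(1,2) fosd sum])
  hence lt: "ereal K < c Q + c' Q'" using p(3) by simp
  have r: "(\<lambda>n. r (\<sigma> n)) \<longlonglongrightarrow> 0" using tendsto_snd[OF X\<sigma>] by (simp add: qq(1))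
  have "c Q + c' Q' \<le> ereal K"
    by (rule lsc_cost_sum_limit[OF lsc nn _ _ lim QQ(1,2) _ r]) (simp_all add: qq(2,3,5))
  thus False using leD lt by blast
qed

lemma inner_nonneg_along_recession_direction:
  fixes v x d :: "'a::real_inner"
  assumes sep: "\<forall>z\<in>E. b < inner v z" and ray: "\<And>t. 0 \<le> t \<Longrightarrow> x + t *\<^sub>R d \<in> E"
  shows "0 \<le> inner v d"
proof (rule ccontr)
  assume "\<not> 0 \<le> inner v d"
  hence neg: "inner v d < 0" by simp
  define t where "t = (\<bar>inner v x - b\<bar> + 1) / - inner v d"
  have "inner v d \<noteq> 0" using neg by simp
  have t1: "0 \<le> t" unfolding t_def using neg by (intro divide_nonneg_pos) auto
  have t2: "t * inner v d = - (\<bar>inner v x - b\<bar> + 1)"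
    unfolding t_def using \<open>inner v d \<noteq> 0\<close> by (simp add: field_simps)
  have "b < inner v (x + t *\<^sub>R d)" using sep ray[OF t1] by blast
  also have "\<dots> = inner v x + t * inner v d" by (simp add: inner_add_right)
  finally show False using t2 abs_ge_self[of "inner v x - b"] by linarith
qed

lemma inner_vec_eq_sum: "inner (x::real^'n) y = (\<Sum>i\<in>UNIV. x $ i * y $ i)"
  by (simp add: inner_vec_def)

lemma improvement_set_separating_signs:
  fixes c c' :: "(real^'s::{finite,linorder}) \<Rightarrow> ereal"
  assumes sep: "\<forall>x\<in>improvement_set c c' p p' K. b < inner ((\<alpha>, \<beta>), \<gamma>) x"
    and p: "p \<in> simplexS" "p' \<in> simplexS" "c p \<noteq> \<infinity>" "c' p' \<noteq> \<infinity>"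
    and K: "K = real_of_ereal (c p) + real_of_ereal (c' p')"
  shows "0 \<le> \<gamma>" "\<beta> $ t \<le> 0"
proof -
  have "0 \<le> inner ((\<alpha>, \<beta>), \<gamma>) ((0, 0), 1)"
  proof (rule inner_nonneg_along_recession_direction[OF sep])
    show "((0, tail_gap p p'), 0) + r *\<^sub>R ((0, 0), 1) \<in> improvement_set c c' p p' K" if "0 \<le> r" for r
      using improvement_setI[of p p' 0 c c' K r p p'] p K that by simp
  qed
  thus "0 \<le> \<gamma>" by simp
  have "0 \<le> inner ((\<alpha>, \<beta>), \<gamma>) ((0, - axis t 1), 0)"
  proof (rule inner_nonneg_along_recession_direction[OF sep])
    show "((0, tail_gap p p'), 0) + r *\<^sub>R ((0, - axis t 1), 0) \<in> improvement_set c c' p p' K"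
      if "0 \<le> r" for r
      using improvement_setI[of p p' "r *\<^sub>R axis t 1" c c' K 0 p p'] p K that by (simp add: axis_def)
  qed
  thus "\<beta> $ t \<le> 0" by (simp add: inner_axis)
qed

lemma improvement_set_separation:
  fixes c c' :: "(real^'s::{finite,linorder}) \<Rightarrow> ereal"
  assumes nn: "\<forall>q\<in>simplexS. 0 \<le> c q" "\<forall>q\<in>simplexS. 0 \<le> c' q"
    and cv: "convex_cost c" "convex_cost c'" and lsc: "lsc_cost c" "lsc_cost c'"
    and p: "p \<in> simplexS" "p' \<in> simplexS" "c p = ereal k" "c' p' = ereal k'"
    and no_improvement: "\<forall>q\<in>simplexS. \<forall>q'\<in>simplexS. fosd p q' \<longrightarrow> q + q' = p + p' \<longrightarrow> c p + c' p' < c q + c' q'"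
  obtains \<alpha> \<beta> \<gamma> b where "0 < b" "0 \<le> \<gamma>" "\<And>t. \<beta> $ t \<le> 0"
    "\<And>q q'. q \<in> simplexS \<Longrightarrow> q' \<in> simplexS \<Longrightarrow> c q \<noteq> \<infinity> \<Longrightarrow> c' q' \<noteq> \<infinity> \<Longrightarrow>
       b < inner \<alpha> (q + q' - p - p') + inner \<beta> (tail_gap p q')
         + \<gamma> * (real_of_ereal (c q) + real_of_ereal (c' q') - (k + k'))"
proof -
  define E where "E = improvement_set c c' p p' (k + k')"
  have "convex (closure E)" unfolding E_def by (intro convex_closure convex_improvement_set cv nn)
  moreover have "0 \<notin> closure E"
    unfolding E_def using p by (intro zero_notin_closure_improvement_set[OF nn lsc p(1,2) _ no_improvement]) auto
  ultimately obtain v b where vb: "inner v 0 < b" "\<forall>x\<in>closure E. b < inner v x"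
    using separating_hyperplane_closed_point[of "closure E" 0] by auto
  have sep: "\<forall>x\<in>E. b < inner v x" using vb closure_subset by blast
  obtain \<alpha> \<beta> \<gamma> where v: "v = ((\<alpha>, \<beta>), \<gamma>)" by (metis prod.collapse)
  have "k + k' = real_of_ereal (c p) + real_of_ereal (c' p')" using p(3,4) by simp
  from improvement_set_separating_signs[OF sep[unfolded E_def v] p(1,2) _ _ this] p(3,4)
  have \<gamma>: "0 \<le> \<gamma>" and \<beta>: "\<beta> $ t \<le> 0" for t by simp_all
  have "b < inner \<alpha> (q + q' - p - p') + inner \<beta> (tail_gap p q')
      + \<gamma> * (real_of_ereal (c q) + real_of_ereal (c' q') - (k + k'))"
    if "q \<in> simplexS" "q' \<in> simplexS" "c q \<noteq> \<infinity>" "c' q' \<noteq> \<infinity>" for q q'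
  proof -
    have "((q + q' - p - p', tail_gap p q' - 0), real_of_ereal (c q) + real_of_ereal (c' q') - (k + k')) \<in> E"
      unfolding E_def using that by (intro improvement_setI) auto
    thus ?thesis using sep by (auto simp: v)
  qed
  moreover have "0 < b" using vb by simp
  ultimately show ?thesis using that \<gamma> \<beta> by blast
qed

text \<open>The factor \<open>(K + 1) / (b + \<gamma> (K + 1))\<close> normalises the separating functional uniformly in
  the cases \<open>\<gamma> > 0\<close> and \<open>\<gamma> = 0\<close>, the latter using only \<open>C \<ge> 0\<close>.\<close>
lemma separation_rescale:
  fixes b \<gamma> K C L :: real
  assumes b: "0 < b" and \<gamma>: "0 \<le> \<gamma>" and K: "0 \<le> K" and C: "0 \<le> C" and sep: "b < L + \<gamma> * (C - K)"
  shows "K - (K + 1) / (b + \<gamma> * (K + 1)) * L + b / (b + \<gamma> * (K + 1)) \<le> C"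
proof -
  define D where "D = b + \<gamma> * (K + 1)"
  have D: "0 < D" using b \<gamma> K by (simp add: D_def add_pos_nonneg)
  have "(K + 1) * b < (K + 1) * (L + \<gamma> * (C - K))" using sep K by simp
  moreover have "0 \<le> b * C" using b C by simp
  ultimately have "D * K - (K + 1) * L + b \<le> D * C" by (simp add: D_def algebra_simps)
  thus ?thesis using D unfolding D_def[symmetric] by (simp add: field_simps)
qed

lemma no_improvement_certificate:
  fixes c c' :: "(real^'s::{finite,linorder}) \<Rightarrow> ereal"
  assumes nn: "\<forall>q\<in>simplexS. 0 \<le> c q" "\<forall>q\<in>simplexS. 0 \<le> c' q"
    and cv: "convex_cost c" "convex_cost c'" and lsc: "lsc_cost c" "lsc_cost c'"
    and p: "p \<in> simplexS" "p' \<in> simplexS" "c p = ereal k" "c' p' = ereal k'"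
    and no_improvement: "\<forall>q\<in>simplexS. \<forall>q'\<in>simplexS. fosd p q' \<longrightarrow> q + q' = p + p' \<longrightarrow> c p + c' p' < c q + c' q'"
  obtains a d \<epsilon> where "0 < \<epsilon>" "mono d"
    "\<And>q q'. q \<in> simplexS \<Longrightarrow> q' \<in> simplexS \<Longrightarrow> c q \<noteq> \<infinity> \<Longrightarrow> c' q' \<noteq> \<infinity> \<Longrightarrow>
       k + k' + payoff a (q + q' - p - p') + payoff d (p - q') + \<epsilon> \<le> real_of_ereal (c q) + real_of_ereal (c' q')"
proof -
  obtain b \<gamma> \<beta> \<alpha> where b: "0 < b" and \<gamma>: "0 \<le> \<gamma>" and \<beta>: "\<And>t. \<beta> $ t \<le> 0"
    and sep: "\<And>q q'. q \<in> simplexS \<Longrightarrow> q' \<in> simplexS \<Longrightarrow> c q \<noteq> \<infinity> \<Longrightarrow> c' q' \<noteq> \<infinity> \<Longrightarrow>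
       b < inner \<alpha> (q + q' - p - p') + inner \<beta> (tail_gap p q')
         + \<gamma> * (real_of_ereal (c q) + real_of_ereal (c' q') - (k + k'))"
    by (rule improvement_set_separation[OF nn cv lsc p no_improvement]) blast
  define K where "K = k + k'"
  have "0 \<le> k" "0 \<le> k'" using nn p by force+
  hence K: "0 \<le> K" by (simp add: K_def)
  define scale where "scale = (K + 1) / (b + \<gamma> * (K + 1))"
  have scale: "0 \<le> scale" using b \<gamma> K by (simp add: scale_def)
  define a where "a = (\<lambda>s. - scale * \<alpha> $ s)"
  define d where "d = (\<lambda>s. \<Sum>t\<in>{t. t \<le> s}. - scale * \<beta> $ t)"
  have pa: "payoff a x = - scale * inner \<alpha> x" for x
    by (simp add: a_def payoff_def inner_vec_eq_sum sum_distrib_left mult.assoc)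
  have pd: "payoff d (p - q') = - scale * inner \<beta> (tail_gap p q')" for q'
    unfolding d_def tail_gap_weighted_sum[symmetric] by (simp add: inner_vec_eq_sum sum_distrib_left mult.assoc)
  show ?thesis
  proof
    show "0 < b / (b + \<gamma> * (K + 1))" using b \<gamma> K by (intro divide_pos_pos add_pos_nonneg) auto
    show "mono d"
      unfolding d_def mono_def using scale \<beta> by (auto intro!: sum_mono2 mult_nonneg_nonpos)
  next
    fix q q' assume q: "q \<in> simplexS" "q' \<in> simplexS" "c q \<noteq> \<infinity>" "c' q' \<noteq> \<infinity>"
    have "0 \<le> real_of_ereal (c q) + real_of_ereal (c' q')"
      using nn q by (simp add: real_of_ereal_pos)
    from separation_rescale[OF b \<gamma> K this sep[OF q, folded K_def]]
    show "k + k' + payoff a (q + q' - p - p') + payoff d (p - q') + b / (b + \<gamma> * (K + 1))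
        \<le> real_of_ereal (c q) + real_of_ereal (c' q')"
      unfolding pa pd K_def[symmetric] scale_def[symmetric] by (simp add: algebra_simps)
  qed
qed

lemma profile_value_add_le:
  assumes c: "admissible_cost c" and c': "admissible_cost c'"
    and bound: "\<And>q q'. q \<in> simplexS \<Longrightarrow> q' \<in> simplexS \<Longrightarrow> c q \<noteq> \<infinity> \<Longrightarrow> c' q' \<noteq> \<infinity> \<Longrightarrow>
       payoff A q - real_of_ereal (c q) + (payoff B q' - real_of_ereal (c' q')) \<le> z"
  shows "profile_value c A + profile_value c' B \<le> z"
proof -
  have "profile_value c A \<le> z - (payoff B q' - real_of_ereal (c' q'))"
    if "q' \<in> simplexS" "c' q' \<noteq> \<infinity>" for q'
    by (rule profile_value_le[OF c]) (use bound that in force)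
  hence "profile_value c' B \<le> z - profile_value c A"
    by (intro profile_value_le[OF c']) force
  thus ?thesis by simp
qed

section \<open>Optimism\<close>

definition gains_more_from_steepness ::
  "((real^'s::{finite,linorder}) \<Rightarrow> ereal) \<Rightarrow> ((real^'s::{finite,linorder}) \<Rightarrow> ereal) \<Rightarrow> bool" where
  "gains_more_from_steepness c c' \<longleftrightarrow>
     (\<forall>A B. mono (\<lambda>s. A s - B s) \<longrightarrow> profile_value c' A - profile_value c' B \<le> profile_value c A - profile_value c B)"

lemma gains_more_from_steepnessD:
  "gains_more_from_steepness c c' \<Longrightarrow> mono (\<lambda>s. A s - B s) \<Longrightarrow>
    profile_value c' A - profile_value c' B \<le> profile_value c A - profile_value c B"
  by (simp add: gains_more_from_steepness_def)

lemma half_sum_eq_iff: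
  fixes p p' q q' :: "'a::real_vector"
  shows "(1/2) *\<^sub>R p + (1/2) *\<^sub>R p' = (1/2) *\<^sub>R q + (1/2) *\<^sub>R q' \<longleftrightarrow> p + p' = q + q'"
  by (simp flip: scaleR_right_distrib)

lemma ereal_add_le_real:
  fixes x y :: ereal
  assumes "0 \<le> x" "0 \<le> y" "x + y \<le> ereal z"
  shows "x \<noteq> \<infinity>" "y \<noteq> \<infinity>" "real_of_ereal x + real_of_ereal y \<le> z"
  using assms by (cases x; cases y; simp)+

lemma up_shifted_imp_gains_more_from_steepness:
  fixes c c' :: "(real^'s::{finite,linorder}) \<Rightarrow> ereal"
  assumes c: "admissible_cost c" and c': "admissible_cost c'" and up: "up_shifted c c'"
  shows "gains_more_from_steepness c c'"
  unfolding gains_more_from_steepness_def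
proof (intro allI impI)
  fix A B :: "'s::{finite,linorder} \<Rightarrow> real" assume steeper: "mono (\<lambda>s. A s - B s)"
  show "profile_value c' A - profile_value c' B \<le> profile_value c A - profile_value c B"
  proof (rule field_le_epsilon)
    fix e :: real assume "0 < e"
    then obtain p p' where p: "p \<in> simplexS" "c p \<noteq> \<infinity>" "profile_value c B - e / 2 < payoff B p - real_of_ereal (c p)"
      and p': "p' \<in> simplexS" "c' p' \<noteq> \<infinity>" "profile_value c' A - e / 2 < payoff A p' - real_of_ereal (c' p')"
      using profile_value_approx[OF c, of "e / 2" B] profile_value_approx[OF c', of "e / 2" A] by (metis half_gt_zero)
    obtain q q' where q: "q \<in> simplexS" "q' \<in> simplexS" "fosd p q'" "q + q' = p + p'"
      "c q + c' q' \<le> c p + c' p'"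
      using up p(1) p'(1) unfolding up_shifted_def half_sum_eq_iff by (metis add.commute)
    have nn: "0 \<le> c p" "0 \<le> c' p'" "0 \<le> c q" "0 \<le> c' q'"
      using admissible_cost_nonneg c c' p(1) p'(1) q(1,2) by auto
    have "c p + c' p' = ereal (real_of_ereal (c p) + real_of_ereal (c' p'))"
      using p(2) p'(2) nn(1,2) by (cases "c p"; cases "c' p'") auto
    hence fin: "c q \<noteq> \<infinity>" "c' q' \<noteq> \<infinity>"
      "real_of_ereal (c q) + real_of_ereal (c' q') \<le> real_of_ereal (c p) + real_of_ereal (c' p')"
      using ereal_add_le_real[OF nn(3,4)] q(5) by auto
    have "payoff (\<lambda>s. A s - B s) q' \<le> payoff (\<lambda>s. A s - B s) p"
      by (rule fosd_payoff_le[OF p(1) q(2,3) steeper])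
    moreover have "payoff A q = payoff A p + payoff A p' - payoff A q'"
      using q(4) by (metis add_diff_cancel_right' payoff_add)
    moreover have "payoff A q - real_of_ereal (c q) \<le> profile_value c A" "payoff B q' - real_of_ereal (c' q') \<le> profile_value c' B"
      using profile_value_ge c c' q(1,2) fin(1,2) by auto
    ultimately show "profile_value c' A - profile_value c' B \<le> profile_value c A - profile_value c B + e"
      using fin(3) p(3) p'(3) by (simp add: payoff_diff_left)
  qed
qed

lemma certificate_violates_gain:
  fixes c c' :: "(real^'s::{finite,linorder}) \<Rightarrow> ereal"
  assumes c: "admissible_cost c" and c': "admissible_cost c'"
    and p: "p \<in> simplexS" "p' \<in> simplexS" "c p = ereal k" "c' p' = ereal k'" and "0 < \<epsilon>"
    and certificate: "\<And>q q'. q \<in> simplexS \<Longrightarrow> q' \<in> simplexS \<Longrightarrow> c q \<noteq> \<infinity> \<Longrightarrow> c' q' \<noteq> \<infinity> \<Longrightarrow>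
       k + k' + payoff a (q + q' - p - p') + payoff d (p - q') + \<epsilon> \<le> real_of_ereal (c q) + real_of_ereal (c' q')"
  shows "profile_value c a - profile_value c (\<lambda>s. a s - d s) < profile_value c' a - profile_value c' (\<lambda>s. a s - d s)"
proof -
  define B where "B = (\<lambda>s. a s - d s)"
  have "profile_value c a + profile_value c' B \<le> payoff B p - k + (payoff a p' - k') - \<epsilon>"
  proof (rule profile_value_add_le[OF c c'])
    fix q q' assume "q \<in> simplexS" "q' \<in> simplexS" "c q \<noteq> \<infinity>" "c' q' \<noteq> \<infinity>"
    from certificate[OF this]
    show "payoff a q - real_of_ereal (c q) + (payoff B q' - real_of_ereal (c' q'))
        \<le> payoff B p - k + (payoff a p' - k') - \<epsilon>"
      by (simp add: B_def payoff_add payoff_diff payoff_diff_left)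
  qed
  also have "\<dots> \<le> profile_value c B + profile_value c' a - \<epsilon>"
    using profile_value_ge[OF c p(1), of B] profile_value_ge[OF c' p(2), of a] p(3,4) by simp
  finally show ?thesis using \<open>0 < \<epsilon>\<close> by (simp add: B_def)
qed

lemma gains_more_from_steepness_imp_up_shifted:
  fixes c c' :: "(real^'s::{finite,linorder}) \<Rightarrow> ereal"
  assumes c: "admissible_cost c" and c': "admissible_cost c'"
    and cv: "convex_cost c" "convex_cost c'" and lsc: "lsc_cost c" "lsc_cost c'"
    and gains: "gains_more_from_steepness c c'"
  shows "up_shifted c c'"
  unfolding up_shifted_def half_sum_eq_iff
proof (intro ballI)
  fix p p' :: "real^'s::{finite,linorder}" assume p: "p \<in> simplexS" and p': "p' \<in> simplexS"
  have nn: "\<forall>q\<in>simplexS. 0 \<le> c q" "\<forall>q\<in>simplexS. 0 \<le> c' q"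
    using c c' by (simp_all add: admissible_cost_def)
  show "\<exists>q\<in>simplexS. \<exists>q'\<in>simplexS. fosd p q' \<and> fosd q p' \<and> p + p' = q + q' \<and> c q + c' q' \<le> c p + c' p'"
  proof (cases "c p = \<infinity> \<or> c' p' = \<infinity>")
    case True
    hence "c p + c' p' = \<infinity>" using nn p p' by auto
    thus ?thesis using p p' by (intro bexI[of _ p'] bexI[of _ p]) (auto simp: fosd_def add.commute)
  next
    case False
    then obtain k k' where k: "c p = ereal k" "c' p' = ereal k'"
      using nn p p' by (cases "c p"; cases "c' p'") auto
    show ?thesis
    proof (rule ccontr)
      assume no: "\<not> ?thesis"
      have "\<forall>q\<in>simplexS. \<forall>q'\<in>simplexS. fosd p q' \<longrightarrow> q + q' = p + p' \<longrightarrow> c p + c' p' < c q + c' q'"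
        using no fosd_complement by (metis not_le)
      then obtain a d \<epsilon> where "0 < \<epsilon>" "mono d"
        "\<And>q q'. q \<in> simplexS \<Longrightarrow> q' \<in> simplexS \<Longrightarrow> c q \<noteq> \<infinity> \<Longrightarrow> c' q' \<noteq> \<infinity> \<Longrightarrow>
          k + k' + payoff a (q + q' - p - p') + payoff d (p - q') + \<epsilon> \<le> real_of_ereal (c q) + real_of_ereal (c' q')"
        by (rule no_improvement_certificate[OF nn cv lsc p p' k]) blast
      hence "profile_value c a - profile_value c (\<lambda>s. a s - d s) < profile_value c' a - profile_value c' (\<lambda>s. a s - d s)"
        by (intro certificate_violates_gain[OF c c' p p' k])
      moreover have "profile_value c' a - profile_value c' (\<lambda>s. a s - d s) \<le> profile_value c a - profile_value c (\<lambda>s. a s - d s)"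
        using gains_more_from_steepnessD[OF gains, of a "\<lambda>s. a s - d s"] \<open>mono d\<close> by simp
      ultimately show False by linarith
    qed
  qed
qed

lemma const_contracts_steeper:
  assumes rep: "parsimonious_rep Prz pi0 pi1 R c u" and "x \<in> lotteries Prz" "y \<in> lotteries Prz"
  shows "steeper R (const_contract x) (const_contract y)"
  using rep_steeper_iff[OF rep const_contract_in_contracts[OF assms(2)] const_contract_in_contracts[OF assms(3)]]
  by (simp add: const_contract_def mono_def)

lemma more_optimistic_imp_same_indifference:
  assumes rep: "parsimonious_rep Prz pi0 pi1 R c u" and rep': "parsimonious_rep Prz pi0 pi1 R' c' u'"
    and opt: "more_optimistic Prz R R'"
    and x: "x \<in> lotteries Prz" and y: "y \<in> lotteries Prz" and eq: "expu u x = expu u y"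
  shows "expu u' x = expu u' y"
proof -
  have "\<not> expu u' y < expu u' x" if "x \<in> lotteries Prz" "y \<in> lotteries Prz" "expu u x = expu u y" for x y
  proof
    assume "expu u' y < expu u' x"
    hence "strict R' (const_contract x) (const_contract y)" using rep_const_strict_iff[OF rep' that(1,2)] by simp
    hence "strict R (const_contract x) (const_contract y)"
      using opt const_contracts_steeper[OF rep that(1,2)] const_contract_in_contracts that(1,2)
      unfolding more_optimistic_def by blast
    thus False using rep_const_strict_iff[OF rep that(1,2)] that(3) by simp
  qed
  from this[OF x y eq] this[OF y x eq[symmetric]] show ?thesis by linarith
qed

lemma more_optimistic_imp_same_utility:
  assumes rep: "parsimonious_rep Prz pi0 pi1 R c u" and rep': "parsimonious_rep Prz pi0 pi1 R' c' u'"
    and pi: "pi0 \<in> Prz" "pi1 \<in> Prz" "pi0 < pi1" and opt: "more_optimistic Prz R R'"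
  shows "\<forall>x\<in>Prz. u x = u' x"
proof
  fix x assume "x \<in> Prz"
  have "strict_mono_on Prz u" using rep by (simp add: parsimonious_rep_def)
  from same_indifference_imp_same_utility[OF this parsimonious_rep_normalised[OF rep pi]
      parsimonious_rep_normalised[OF rep' pi] pi more_optimistic_imp_same_indifference[OF rep rep' opt] \<open>x \<in> Prz\<close>]
  show "u x = u' x" .
qed

lemma rep_le_iff_same_utility:
  assumes rep': "parsimonious_rep Prz pi0 pi1 R' c' u'" and same: "\<forall>x\<in>Prz. u x = u' x"
    and w: "w \<in> contracts Prz" "w' \<in> contracts Prz"
  shows "R' w w' \<longleftrightarrow> profile_value c' (\<lambda>s. expu u (w' s)) \<le> profile_value c' (\<lambda>s. expu u (w s))"
    and "strict R' w w' \<longleftrightarrow> profile_value c' (\<lambda>s. expu u (w' s)) < profile_value c' (\<lambda>s. expu u (w s))"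
proof -
  have same_profile: "(\<lambda>s. expu u' (v s)) = (\<lambda>s. expu u (v s))" if "v \<in> contracts Prz" for v
    using expu_cong[OF contracts_lottery[OF that] same] by simp
  show "R' w w' \<longleftrightarrow> profile_value c' (\<lambda>s. expu u (w' s)) \<le> profile_value c' (\<lambda>s. expu u (w s))"
    and "strict R' w w' \<longleftrightarrow> profile_value c' (\<lambda>s. expu u (w' s)) < profile_value c' (\<lambda>s. expu u (w s))"
    using rep_le_iff[OF rep' w] rep_strict_iff[OF rep' w] same_profile[OF w(1)] same_profile[OF w(2)]
    by simp_all
qed

text \<open>Unboundedness of \<open>R\<close> lets every pair of profiles be realised by contracts.\<close>
lemma more_optimistic_imp_gains_more_from_steepness:
  fixes c c' :: "(real^'s::{finite,linorder}) \<Rightarrow> ereal"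
  assumes rep: "parsimonious_rep Prz pi0 pi1 R c u" and rep': "parsimonious_rep Prz pi0 pi1 R' c' u'"
    and unb: "unbounded_pref Prz R" and same: "\<forall>x\<in>Prz. u x = u' x"
    and opt: "more_optimistic Prz R R'"
  shows "gains_more_from_steepness c c'"
  unfolding gains_more_from_steepness_def
proof (intro allI impI)
  fix A B :: "'s::{finite,linorder} \<Rightarrow> real" assume steeper: "mono (\<lambda>s. A s - B s)"
  define k where "k = profile_value c' A - profile_value c' B"
  obtain w where w: "w \<in> contracts Prz" "\<And>s. expu u (w s) = A s"
    using unbounded_profile_realizable[OF rep unb, where A = A] by blast
  obtain w' where w': "w' \<in> contracts Prz" "\<And>s. expu u (w' s) = B s + k"
    using unbounded_profile_realizable[OF rep unb, where A = "\<lambda>s. B s + k"] by blast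
  have "steeper R w w'"
    using steeper by (simp add: rep_steeper_iff[OF rep w(1) w'(1)] w w' mono_def)
  moreover have "R' w w'"
    using rep_le_iff_same_utility(1)[OF rep' same w(1) w'(1)] parsimonious_rep_admissible[OF rep']
    by (simp add: w w' profile_value_add_const k_def)
  ultimately have "R w w'" using opt w(1) w'(1) unfolding more_optimistic_def by blast
  thus "profile_value c' A - profile_value c' B \<le> profile_value c A - profile_value c B"
    using rep_le_iff[OF rep w(1) w'(1)] parsimonious_rep_admissible[OF rep]
    by (simp add: w w' profile_value_add_const k_def)
qed

lemma gains_more_from_steepness_imp_more_optimistic:
  assumes rep: "parsimonious_rep Prz pi0 pi1 R c u" and rep': "parsimonious_rep Prz pi0 pi1 R' c' u'"
    and same: "\<forall>x\<in>Prz. u x = u' x" and gains: "gains_more_from_steepness c c'"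
  shows "more_optimistic Prz R R'"
  unfolding more_optimistic_def
proof (intro ballI impI)
  fix w w' assume w: "w \<in> contracts Prz" "w' \<in> contracts Prz" and "steeper R w w'"
  hence "mono (\<lambda>s. expu u (w s) - expu u (w' s))" using rep_steeper_iff[OF rep w] by simp
  hence "profile_value c' (\<lambda>s. expu u (w s)) - profile_value c' (\<lambda>s. expu u (w' s))
      \<le> profile_value c (\<lambda>s. expu u (w s)) - profile_value c (\<lambda>s. expu u (w' s))"
    by (rule gains_more_from_steepnessD[OF gains])
  thus "(R' w w' \<longrightarrow> R w w') \<and> (strict R' w w' \<longrightarrow> strict R w w')"
    using rep_le_iff_same_utility[OF rep' same w] rep_le_iff[OF rep w] rep_strict_iff[OF rep w]
    by linarith
qed

theorem proposition4:
  fixes Prz :: "real set" and pi0 pi1 :: real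
    and R R' :: "('s::{finite,linorder}) contract \<Rightarrow> 's contract \<Rightarrow> bool"
    and c c' :: "(real^('s::{finite,linorder})) \<Rightarrow> ereal" and u u' :: "real \<Rightarrow> real"
  assumes "convex Prz" and "pi0 \<in> Prz" and "pi1 \<in> Prz" and "pi0 < pi1"
    and "unbounded_pref Prz R" and "unbounded_pref Prz R'"
    and "parsimonious_rep Prz pi0 pi1 R c u"
    and "parsimonious_rep Prz pi0 pi1 R' c' u'"
  shows "more_optimistic Prz R R' \<longleftrightarrow> ((\<forall>x\<in>Prz. u x = u' x) \<and> up_shifted c c')"
proof -
  note rep = assms(7) and rep' = assms(8)
  have "gains_more_from_steepness c c' \<longleftrightarrow> up_shifted c c'"
    using rep rep' gains_more_from_steepness_imp_up_shifted up_shifted_imp_gains_more_from_steepness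
    by (metis parsimonious_rep_def parsimonious_rep_admissible)
  thus ?thesis
    using more_optimistic_imp_same_utility[OF rep rep' assms(2-4)]
      more_optimistic_imp_gains_more_from_steepness[OF rep rep' assms(5)]
      gains_more_from_steepness_imp_more_optimistic[OF rep rep']
    by blast
qed

end
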